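(* Let $U\in\mathbb R^{d\times(d-k)}$, $V\in\mathbb R^{d\times k}$ have orthonormal columns with $UU^*+VV^*=I$, and let $\hat U\in\mathbb R^{d\times(d-k)}$, $\hat V\in\mathbb R^{d\times k}$ have orthonormal columns with $\hat U\hat U^*+\hat V\hat V^*=I$. Let $S\in\mathbb R^{d\times k}$ be such that $V^*S$ and $\hat V^*S$ are invertible. If $\|U^*\hat V\|\le1/2$ and $\|\hat U^*S(\hat V^*S)^{-1}\|\le\gamma\le1$, then $$\|U^*S(V^*S)^{-1}\|\le\frac{2+4\gamma}{3-2\gamma}.$$
   Context: $\|\cdot\|$ is the spectral norm. *)

theory Defs
  imports "HOL-Analysis.Analysis"
begin

definition spec_norm :: "real ^ 'n ^ 'm \<Rightarrow> real" where
  "spec_norm A = onorm (\<lambda>x. A *v x)"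

end

theory Submission
  imports Defs
begin

(* Fix y, let s = S (V^T S)^-1 y, and write p = U^T s, a = Uh^T s, b = Vh^T s.
   Then V^T s = y and a = Uh^T S (Vh^T S)^-1 b, so |a| <= gamma |b|.  Expanding s in
   the hatted basis gives |p| <= |a| + |b|/2, and pairing Vh b with s expanded in the
   unhatted basis gives |b|^2 <= |b| |p|/2 + |b| |y|.  Eliminating a and b leaves a
   linear inequality for |p| in terms of |y|. *)

declare transpose_matrix_vector[simp del] vector_transpose_matrix[simp del]

lemma inner_matrix_vector_mult_left:
  "((A::real^'n^'m) *v x) \<bullet> y = x \<bullet> (transpose A *v y)"
  by (metis dot_lmul_matrix vector_transpose_matrix)

lemma inner_matrix_vector_mult_right:
  "x \<bullet> ((A::real^'n^'m) *v y) = (transpose A *v x) \<bullet> y"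
  by (metis inner_commute inner_matrix_vector_mult_left)

lemma norm_matrix_vector_mult_isometry:
  fixes A :: "real^'n^'m"
  assumes "transpose A ** A = mat 1"
  shows "norm (A *v x) = norm x"
proof -
  have "(A *v x) \<bullet> (A *v x) = x \<bullet> x"
    by (simp add: inner_matrix_vector_mult_left matrix_vector_mul_assoc assms)
  then show ?thesis by (simp add: norm_eq_sqrt_inner)
qed

lemma resolution_of_identity_decompose:
  fixes A :: "real^'n^'m" and B :: "real^'k^'m"
  assumes "A ** transpose A + B ** transpose B = mat 1"
  shows "A *v (transpose A *v z) + B *v (transpose B *v z) = z"
proof -
  have "A *v (transpose A *v z) + B *v (transpose B *v z) = (A ** transpose A + B ** transpose B) *v z"
    by (simp only: matrix_vector_mult_add_rdistrib matrix_vector_mul_assoc)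
  then show ?thesis using assms by simp
qed

lemma norm_transpose_pythagoras:
  fixes A :: "real^'n^'m" and B :: "real^'k^'m"
  assumes "A ** transpose A + B ** transpose B = mat 1"
  shows "norm (transpose A *v z)^2 + norm (transpose B *v z)^2 = (norm z)^2"
proof -
  have "z \<bullet> z = z \<bullet> (A *v (transpose A *v z) + B *v (transpose B *v z))"
    by (simp only: resolution_of_identity_decompose[OF assms])
  also have "\<dots> = (transpose A *v z) \<bullet> (transpose A *v z) + (transpose B *v z) \<bullet> (transpose B *v z)"
    by (simp only: inner_add_right inner_matrix_vector_mult_right)
  finally show ?thesis by (simp add: power2_norm_eq_inner)
qed

lemma norm_transpose_le_of_resolution:
  fixes A :: "real^'n^'m" and B :: "real^'k^'m"
  assumes "A ** transpose A + B ** transpose B = mat 1"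
  shows "norm (transpose A *v z) \<le> norm z"
proof (rule power2_le_imp_le)
  show "(norm (transpose A *v z))^2 \<le> (norm z)^2"
    using norm_transpose_pythagoras[OF assms, of z] zero_le_power2[of "norm (transpose B *v z)"]
    by linarith
qed simp

lemma norm_le_spec_norm: "norm ((A::real^'n^'m) *v x) \<le> spec_norm A * norm x"
  unfolding spec_norm_def by (rule onorm) simp

lemma spec_norm_nonneg: "0 \<le> spec_norm (A::real^'n^'m)"
  unfolding spec_norm_def by (rule onorm_pos_le) simp

lemma matrix_inv_right: "invertible (A::real^'n^'m) \<Longrightarrow> A ** matrix_inv A = mat 1"
  unfolding invertible_def matrix_inv_def
  by (rule someI_ex[where P="\<lambda>A'. A ** A' = mat 1 \<and> A' ** A = mat 1", THEN conjunct1])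

lemma matrix_inv_left: "invertible (A::real^'n^'m) \<Longrightarrow> matrix_inv A ** A = mat 1"
  unfolding invertible_def matrix_inv_def
  by (rule someI_ex[where P="\<lambda>A'. A ** A' = mat 1 \<and> A' ** A = mat 1", THEN conjunct2])

lemma norm_transpose_le_via_other_basis:
  fixes U Uh :: "real^'m^'d" and V Vh :: "real^'k^'d"
  assumes UV: "U ** transpose U + V ** transpose V = mat 1"
    and Uh_orth: "transpose Uh ** Uh = mat 1"
    and UVh: "Uh ** transpose Uh + Vh ** transpose Vh = mat 1"
    and c: "spec_norm (transpose U ** Vh) \<le> c"
  shows "norm (transpose U *v s) \<le> norm (transpose Uh *v s) + c * norm (transpose Vh *v s)"
proof -
  let ?a = "transpose Uh *v s" and ?b = "transpose Vh *v s"
  have "transpose U *v s = transpose U *v (Uh *v ?a + Vh *v ?b)"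
    by (simp only: resolution_of_identity_decompose[OF UVh])
  also have "\<dots> = transpose U *v (Uh *v ?a) + (transpose U ** Vh) *v ?b"
    by (simp only: matrix_vector_right_distrib matrix_vector_mul_assoc matrix_mul_assoc)
  finally have "transpose U *v s = transpose U *v (Uh *v ?a) + (transpose U ** Vh) *v ?b" .
  moreover have "norm (transpose U *v (Uh *v ?a)) \<le> norm ?a"
    using norm_transpose_le_of_resolution[OF UV, of "Uh *v ?a"]
      norm_matrix_vector_mult_isometry[OF Uh_orth] by simp
  moreover have "norm ((transpose U ** Vh) *v ?b) \<le> c * norm ?b"
    using norm_le_spec_norm[of "transpose U ** Vh" ?b] c by (meson mult_right_mono norm_ge_zero order_trans)
  ultimately show ?thesis
    by (smt (verit) norm_triangle_ineq)
qed

lemma norm_transpose_le_via_cross_term: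
  fixes U :: "real^'m^'d" and V Vh :: "real^'k^'d"
  assumes UV: "U ** transpose U + V ** transpose V = mat 1"
    and Vh_orth: "transpose Vh ** Vh = mat 1"
    and c: "spec_norm (transpose U ** Vh) \<le> c"
  shows "norm (transpose Vh *v s) \<le> c * norm (transpose U *v s) + norm (transpose V *v s)"
proof -
  define b where "b = transpose Vh *v s"
  define p where "p = transpose U *v s"
  define y where "y = transpose V *v s"
  have cross: "norm ((transpose U ** Vh) *v b) \<le> c * norm b"
    using norm_le_spec_norm[of "transpose U ** Vh" b] c by (meson mult_right_mono norm_ge_zero order_trans)
  have "norm ((transpose V ** Vh) *v b) = norm (transpose V *v (Vh *v b))"
    by (simp only: matrix_vector_mul_assoc)
  also have "\<dots> \<le> norm b"
    using norm_transpose_le_of_resolution[of V U, of "Vh *v b"] UV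
      norm_matrix_vector_mult_isometry[OF Vh_orth] by (simp add: add.commute)
  finally have direct: "norm ((transpose V ** Vh) *v b) \<le> norm b" .
  have "(norm b)^2 = (Vh *v b) \<bullet> s"
    by (simp add: b_def power2_norm_eq_inner inner_matrix_vector_mult_left)
  also have "\<dots> = (Vh *v b) \<bullet> (U *v p + V *v y)"
    unfolding p_def y_def by (simp only: resolution_of_identity_decompose[OF UV])
  also have "\<dots> = ((transpose U ** Vh) *v b) \<bullet> p + ((transpose V ** Vh) *v b) \<bullet> y"
    by (simp only: inner_add_right inner_matrix_vector_mult_right matrix_vector_mul_assoc)
  also have "\<dots> \<le> c * norm b * norm p + norm b * norm y"
    using cross direct
    by (intro add_mono order_trans[OF norm_cauchy_schwarz] mult_right_mono) auto
  finally have "norm b * norm b \<le> norm b * (c * norm p + norm y)"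
    by (simp add: power2_eq_square algebra_simps)
  moreover have "0 \<le> c"
    using spec_norm_nonneg c by (rule order_trans)
  ultimately have "norm b \<le> c * norm p + norm y"
    by (cases "norm b = 0") (auto simp: mult_le_cancel_left)
  then show ?thesis
    by (simp only: b_def p_def y_def)
qed

lemma eliminate_auxiliary_norms:
  fixes p a b y \<gamma> :: real
  assumes "p \<le> a + b / 2" "a \<le> \<gamma> * b" "b \<le> p / 2 + y" "0 \<le> \<gamma>" "\<gamma> \<le> 1"
  shows "p \<le> (2 + 4 * \<gamma>) / (3 - 2 * \<gamma>) * y"
proof -
  have "p \<le> (\<gamma> + 1/2) * b"
    using assms(1,2) by (simp add: algebra_simps)
  also have "\<dots> \<le> (\<gamma> + 1/2) * (p / 2 + y)"
    using assms(3,4) by (intro mult_left_mono) auto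
  finally have "p * (3 - 2 * \<gamma>) \<le> (2 + 4 * \<gamma>) * y"
    by (simp add: algebra_simps)
  then show ?thesis
    using \<open>\<gamma> \<le> 1\<close> by (simp add: pos_le_divide_eq)
qed

theorem propositionE3:
  fixes U Uh :: "real ^ 'm ^ 'd" and V Vh S :: "real ^ 'k ^ 'd" and \<gamma> :: real
  assumes dims: "CARD('m) + CARD('k) = CARD('d)"
    and U_orth: "transpose U ** U = mat 1"
    and V_orth: "transpose V ** V = mat 1"
    and UV: "U ** transpose U + V ** transpose V = mat 1"
    and Uh_orth: "transpose Uh ** Uh = mat 1"
    and Vh_orth: "transpose Vh ** Vh = mat 1"
    and UVh: "Uh ** transpose Uh + Vh ** transpose Vh = mat 1"
    and inv1: "invertible (transpose V ** S)"
    and inv2: "invertible (transpose Vh ** S)"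
    and h1: "spec_norm (transpose U ** Vh) \<le> 1/2"
    and h2: "spec_norm (transpose Uh ** S ** matrix_inv (transpose Vh ** S)) \<le> \<gamma>"
    and h3: "\<gamma> \<le> 1"
  shows "spec_norm (transpose U ** S ** matrix_inv (transpose V ** S)) \<le> (2 + 4 * \<gamma>) / (3 - 2 * \<gamma>)"
  unfolding spec_norm_def
proof (rule onorm_le)
  fix y :: "real^'k"
  let ?G = "transpose Uh ** S ** matrix_inv (transpose Vh ** S)"
  define s where "s = S *v (matrix_inv (transpose V ** S) *v y)"
  have y: "transpose V *v s = y"
    using matrix_inv_right[OF inv1] by (simp add: s_def matrix_vector_mul_assoc matrix_mul_assoc)
  have "?G *v (transpose Vh *v s) = transpose Uh *v (S *v
      ((matrix_inv (transpose Vh ** S) ** (transpose Vh ** S)) *v (matrix_inv (transpose V ** S) *v y)))"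
    by (simp only: s_def matrix_vector_mul_assoc matrix_mul_assoc)
  also have "\<dots> = transpose Uh *v s"
    by (simp add: s_def matrix_inv_left[OF inv2])
  finally have "norm (transpose Uh *v s) \<le> spec_norm ?G * norm (transpose Vh *v s)"
    by (metis norm_le_spec_norm)
  then have "norm (transpose Uh *v s) \<le> \<gamma> * norm (transpose Vh *v s)"
    using h2 by (meson mult_right_mono norm_ge_zero order_trans)
  moreover have "0 \<le> \<gamma>" using spec_norm_nonneg[of ?G] h2 by linarith
  ultimately have "norm (transpose U *v s) \<le> (2 + 4 * \<gamma>) / (3 - 2 * \<gamma>) * norm y"
    using norm_transpose_le_via_other_basis[OF UV Uh_orth UVh h1, of s]
      norm_transpose_le_via_cross_term[OF UV Vh_orth h1, of s] h3
    by (intro eliminate_auxiliary_norms[where a = "norm (transpose Uh *v s)"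
          and b = "norm (transpose Vh *v s)"]) (simp_all add: y)
  then show "norm ((transpose U ** S ** matrix_inv (transpose V ** S)) *v y)
      \<le> (2 + 4 * \<gamma>) / (3 - 2 * \<gamma>) * norm y"
    by (simp add: s_def matrix_vector_mul_assoc matrix_mul_assoc)
qed

end
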